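(* A topical function $f: \mathbb{R}^n \to \mathbb{R}^n$ is indecomposable if and only if the aggregated graph $\mathcal{G}^\infty(f)$ is strongly connected.
   Context: $f: \mathbb{R}^n \to \mathbb{R}^n$ is topical if $f(x+h) = f(x) + h$ for all $h \in \mathbb{R}$, $x \in \mathbb{R}^n$ (adding a scalar to every coordinate) and $x \le y$ componentwise implies $f(x) \le f(y)$. For $J \subseteq \{1,\dots,n\}$, $e_J$ is its characteristic vector. $f$ is decomposable if there is a partition $\{1,\dots,n\} = I \cup J$ into disjoint nonempty sets with $\lim_{u\to\infty} f_i(u e_J) < \infty$ for all $i \in I$; indecomposable otherwise. Aggregated graphs: $\mathcal{G}^1(f) = \mathcal{G}(f)$ is the directed graph on $\{1,\dots,n\}$ with an edge $i\to j$ iff $\lim_{u\to\infty} f_i(u e_{\{j\}}) = \infty$; each vertex $i$ is associated with the set $\sigma(i) = \{i\}$. For $k \ge 2$, the vertices of $\mathcal{G}^k(f)$ are the strongly connected components of $\mathcal{G}^{k-1}(f)$ (equivalence classes under: $X$ communicates with $Y$ iff $X = Y$ or there are directed paths both ways), a component $X$ being associated with $\sigma(X) = \bigcup_{Y \in X} \sigma(Y) \subseteq \{1,\dots,n\}$; there is an edge from $I$ to $J$ in $\mathcal{G}^k(f)$ iff there exists $i \in \sigma(I)$ with $\lim_{u\to\infty} f_i(u e_{\sigma(J)}) = \infty$. There is a least $N \le n$ such that $\mathcal{G}^k(f)$ is isomorphic to $\mathcal{G}^N(f)$ for all $k \ge N$, and $\mathcal{G}^\infty(f) := \mathcal{G}^N(f)$.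 *)

theory Defs
  imports "HOL-Analysis.Analysis"
begin

definition topical :: "(real^'n \<Rightarrow> real^'n) \<Rightarrow> bool" where
  "topical f \<longleftrightarrow>
     (\<forall>x h. f (x + (\<chi> i. h)) = f x + (\<chi> i. h)) \<and>
     (\<forall>x y. (\<forall>i. x $ i \<le> y $ i) \<longrightarrow> (\<forall>i. f x $ i \<le> f y $ i))"

definition charvec :: "'n set \<Rightarrow> real^'n" where
  "charvec J = (\<chi> i. if i \<in> J then 1 else 0)"

text \<open>lim_{u\<rightarrow>\<infinity>} f_i(u e_J) = \<infinity> (the limit exists in the extended reals
 by monotonicity; it is finite iff this fails).\<close>
definition lim_infinite :: "(real^'n \<Rightarrow> real^'n) \<Rightarrow> 'n \<Rightarrow> 'n set \<Rightarrow> bool" where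
  "lim_infinite f i J \<longleftrightarrow> filterlim (\<lambda>u. f (u *\<^sub>R charvec J) $ i) at_top at_top"

definition decomposable :: "(real^'n::finite \<Rightarrow> real^'n) \<Rightarrow> bool" where
  "decomposable f \<longleftrightarrow> (\<exists>I J. I \<union> J = UNIV \<and> I \<inter> J = {} \<and> I \<noteq> {} \<and> J \<noteq> {} \<and>
                               (\<forall>i\<in>I. \<not> lim_infinite f i J))"

definition indecomposable :: "(real^'n::finite \<Rightarrow> real^'n) \<Rightarrow> bool" where
  "indecomposable f \<longleftrightarrow> \<not> decomposable f"

type_synonym 'v digraph = "'v set \<times> ('v \<Rightarrow> 'v \<Rightarrow> bool)"

definition digraph_iso :: "'v digraph \<Rightarrow> 'w digraph \<Rightarrow> bool" where
  "digraph_iso G H \<longleftrightarrow> (\<exists>h. bij_betw h (fst G) (fst H) \<and>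
     (\<forall>x\<in>fst G. \<forall>y\<in>fst G. snd G x y \<longleftrightarrow> snd H (h x) (h y)))"

definition strongly_connected :: "'v digraph \<Rightarrow> bool" where
  "strongly_connected G \<longleftrightarrow>
     (\<forall>x\<in>fst G. \<forall>y\<in>fst G. (x, y) \<in> {(a, b). a \<in> fst G \<and> b \<in> fst G \<and> snd G a b}\<^sup>*)"

text \<open>Vertices of the aggregated graphs are represented by their associated
 sets \<sigma>(X) \<subseteq> {1..n}; \<sigma> is injective since these sets are disjoint and nonempty.\<close>
definition agg_edge :: "(real^'n \<Rightarrow> real^'n) \<Rightarrow> 'n set set \<Rightarrow> 'n set \<Rightarrow> 'n set \<Rightarrow> bool" where
  "agg_edge f P I J \<longleftrightarrow> I \<in> P \<and> J \<in> P \<and> (\<exists>i\<in>I. lim_infinite f i J)"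

definition communicates :: "(real^'n \<Rightarrow> real^'n) \<Rightarrow> 'n set set \<Rightarrow> 'n set \<Rightarrow> 'n set \<Rightarrow> bool" where
  "communicates f P X Y \<longleftrightarrow>
     (X, Y) \<in> {(a, b). agg_edge f P a b}\<^sup>* \<and> (Y, X) \<in> {(a, b). agg_edge f P a b}\<^sup>*"

text \<open>agg_parts f k is the vertex set of G^(k+1)(f).\<close>
primrec agg_parts :: "(real^'n \<Rightarrow> real^'n) \<Rightarrow> nat \<Rightarrow> 'n set set" where
  "agg_parts f 0 = {{i} | i. True}"
| "agg_parts f (Suc k) =
     (\<lambda>X. \<Union> {Y \<in> agg_parts f k. communicates f (agg_parts f k) X Y}) ` agg_parts f k"

text \<open>agg_graph f k = G^(k+1)(f).\<close>
definition agg_graph :: "(real^'n \<Rightarrow> real^'n) \<Rightarrow> nat \<Rightarrow> 'n set digraph" where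
  "agg_graph f k = (agg_parts f k, agg_edge f (agg_parts f k))"

definition agg_graph_inf :: "(real^'n \<Rightarrow> real^'n) \<Rightarrow> 'n set digraph" where
  "agg_graph_inf f = agg_graph f
     (LEAST N. \<forall>k\<ge>N. digraph_iso (agg_graph f k) (agg_graph f N))"

end

(*
  Each aggregation step merges the communication classes of the current graph, so the
  number of blocks never increases.  At the level N defining G^inf, the graph G^(N+1) is
  isomorphic to G^N and has as many vertices, hence communication in G^N is trivial: its
  only cycles are loops.  If such a graph is not strongly connected, it has a block W with
  no incoming edge from another block, and (complement of W, W) decomposes f.  Conversely,
  if (I, J) decomposes f, monotonicity of f shows that no edge leads from a block inside I
  to a block inside J; by induction every aggregated block lies in I or in J, so no G^k is
  strongly connected.
*)

theory Submission
  imports Defs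
begin

definition merge_classes :: "'a set rel \<Rightarrow> 'a set set \<Rightarrow> 'a set set" where
  "merge_classes R P = (\<lambda>X. \<Union>(R `` {X})) ` P"

lemma partition_on_merge_classes:
  assumes P: "partition_on A P" and R: "equiv P R"
  shows "partition_on A (merge_classes R P)"
proof (rule partition_onI)
  have R_sub: "R \<subseteq> P \<times> P"
    using R by (rule equiv_type)
  have self: "X \<in> R `` {X}" if "X \<in> P" for X
    using R that by (rule equiv_class_self)
  have "\<Union>(merge_classes R P) = \<Union>P"
  proof
    show "\<Union>(merge_classes R P) \<subseteq> \<Union>P"
      using R_sub unfolding merge_classes_def by blast
    show "\<Union>P \<subseteq> \<Union>(merge_classes R P)"
      using self unfolding merge_classes_def by blast
  qed
  then show "\<Union>(merge_classes R P) = A"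
    using P[THEN partition_onD1] by simp
  have "\<Union>(R `` {X}) \<noteq> {}" if "X \<in> P" for X
    using self[OF that] P[THEN partition_onD3] that by (metis Union_upper subset_empty)
  then show "{} \<notin> merge_classes R P"
    unfolding merge_classes_def by auto
  fix p q assume "p \<in> merge_classes R P" "q \<in> merge_classes R P" "p \<noteq> q"
  then obtain X Y where p: "p = \<Union>(R `` {X})" and q: "q = \<Union>(R `` {Y})"
    unfolding merge_classes_def by blast
  show "disjnt p q"
  proof (rule ccontr)
    assume "\<not> disjnt p q"
    then obtain x Z Z' where Z: "(X, Z) \<in> R" "x \<in> Z" and Z': "(Y, Z') \<in> R" "x \<in> Z'"
      unfolding p q disjnt_iff by blast
    then have "Z = Z'"
      using P[THEN partition_onD2] R_sub by (auto dest: disjointD)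
    then have "R `` {X} = R `` {Y}"
      using Z Z' R by (metis equiv_class_eq equiv_class_eq_iff)
    then show False
      using \<open>p \<noteq> q\<close> p q by simp
  qed
qed

lemma card_merge_classes_le: "finite P \<Longrightarrow> card (merge_classes R P) \<le> card P"
  unfolding merge_classes_def by (rule card_image_le)

lemma Id_on_if_card_merge_classes_eq:
  assumes "finite P" "equiv P R" "card (merge_classes R P) = card P"
  shows "R = Id_on P"
proof -
  have inj: "inj_on (\<lambda>X. \<Union>(R `` {X})) P"
    using assms by (simp add: merge_classes_def inj_on_iff_eq_card)
  have "X = Y" if "(X, Y) \<in> R" for X Y
    using that assms(2) inj_onD[OF inj] equiv_class_eq[OF assms(2)]
    by (metis equiv_type mem_Sigma_iff subsetD)
  then show ?thesis
    using assms(2) by (auto elim: equivE simp: refl_on_def)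
qed

lemma merge_classes_Id_on: "merge_classes (Id_on P) P = P"
proof -
  have "merge_classes (Id_on P) P = (\<lambda>X. X) ` P"
    unfolding merge_classes_def by (intro image_cong) (auto simp: Id_on_def)
  then show ?thesis
    by simp
qed

lemma wf_Diff_Id_if_antisym_rtrancl:
  assumes "finite E" "antisym (E\<^sup>*)"
  shows "wf (E - Id)"
proof (rule finite_acyclic_wf)
  show "finite (E - Id)"
    using assms(1) by simp
  have "partial_order_on UNIV (E\<^sup>*)"
    using assms(2) by (simp add: partial_order_on_def preorder_on_def refl_rtrancl trans_rtrancl)
  then show "acyclic (E - Id)"
    by (rule acyclic_subset[OF partial_order_on_acyclic]) auto
qed

lemma digraph_iso_refl: "digraph_iso G G"
  unfolding digraph_iso_def by (intro exI[of _ id]) auto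

definition communication_rel :: "(real^'n \<Rightarrow> real^'n) \<Rightarrow> 'n set set \<Rightarrow> 'n set rel" where
  "communication_rel f P = {(X, Y). X \<in> P \<and> Y \<in> P \<and> communicates f P X Y}"

lemma equiv_communication_rel: "equiv P (communication_rel f P)"
  unfolding equiv_def refl_on_def sym_def trans_def communication_rel_def communicates_def
  by (auto intro: rtrancl_trans)

lemma strongly_connected_agg_iff:
  "strongly_connected (P, agg_edge f P) \<longleftrightarrow> (\<forall>X\<in>P. \<forall>Y\<in>P. (X, Y) \<in> {(A, B). agg_edge f P A B}\<^sup>*)"
proof -
  have "{(A, B). A \<in> P \<and> B \<in> P \<and> agg_edge f P A B} = {(A, B). agg_edge f P A B}"
    by (auto simp: agg_edge_def)
  then show ?thesis
    by (simp add: strongly_connected_def)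
qed

lemma agg_parts_Suc_eq:
  "agg_parts f (Suc k) = merge_classes (communication_rel f (agg_parts f k)) (agg_parts f k)"
  unfolding agg_parts.simps merge_classes_def communication_rel_def
  by (intro image_cong refl arg_cong[where f = Union]) auto

lemma partition_on_agg_parts: "partition_on UNIV (agg_parts f k)"
proof (induction k)
  case 0
  have "agg_parts f 0 = (\<lambda>i. {i}) ` UNIV"
    by auto
  then show ?case
    using partition_on_singletons by metis
next
  case (Suc k)
  then show ?case
    unfolding agg_parts_Suc_eq by (intro partition_on_merge_classes equiv_communication_rel)
qed

lemma finite_agg_parts: "finite (agg_parts f k)"
  using finite_elements[OF finite_class.finite_UNIV partition_on_agg_parts] .

lemma agg_parts_eventually_communication_trivial:
  "\<exists>M. communication_rel f (agg_parts f M) = Id_on (agg_parts f M)"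
proof -
  define M where "M = arg_min (\<lambda>k. card (agg_parts f k)) (\<lambda>_. True)"
  have "card (agg_parts f M) \<le> card (agg_parts f (Suc M))"
    unfolding M_def by (rule arg_min_nat_le) simp
  then have "card (agg_parts f (Suc M)) = card (agg_parts f M)"
    using card_merge_classes_le[OF finite_agg_parts] unfolding agg_parts_Suc_eq by (metis le_antisym)
  then have "communication_rel f (agg_parts f M) = Id_on (agg_parts f M)"
    unfolding agg_parts_Suc_eq
    by (rule Id_on_if_card_merge_classes_eq[OF finite_agg_parts equiv_communication_rel])
  then show ?thesis
    by blast
qed

lemma agg_graph_inf_communication_trivial:
  "\<exists>N. agg_graph_inf f = agg_graph f N \<and>
       communication_rel f (agg_parts f N) = Id_on (agg_parts f N)"
proof -
  obtain M where M: "communication_rel f (agg_parts f M) = Id_on (agg_parts f M)"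
    using agg_parts_eventually_communication_trivial by blast
  have "agg_parts f k = agg_parts f M" if "M \<le> k" for k
    using that
    by (induction k rule: dec_induct)
      (simp_all del: agg_parts.simps add: agg_parts_Suc_eq M merge_classes_Id_on)
  then have stable: "\<forall>k\<ge>M. digraph_iso (agg_graph f k) (agg_graph f M)"
    unfolding agg_graph_def by (metis digraph_iso_refl)
  define N where "N = (LEAST N. \<forall>k\<ge>N. digraph_iso (agg_graph f k) (agg_graph f N))"
  have "\<forall>k\<ge>N. digraph_iso (agg_graph f k) (agg_graph f N)"
    unfolding N_def using stable by (rule LeastI)
  then have iso: "digraph_iso (agg_graph f (Suc N)) (agg_graph f N)"
    by simp
  have N: "agg_graph_inf f = agg_graph f N"
    unfolding agg_graph_inf_def N_def ..
  have "card (agg_parts f (Suc N)) = card (agg_parts f N)"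
    using iso unfolding digraph_iso_def agg_graph_def fst_conv by (blast dest: bij_betw_same_card)
  then have "communication_rel f (agg_parts f N) = Id_on (agg_parts f N)"
    unfolding agg_parts_Suc_eq
    by (rule Id_on_if_card_merge_classes_eq[OF finite_agg_parts equiv_communication_rel])
  with N show ?thesis
    by blast
qed

lemma antisym_agg_edges_rtrancl:
  assumes "communication_rel f P = Id_on P"
  shows "antisym ({(A, B). agg_edge f P A B}\<^sup>*)"
proof (rule antisymI)
  fix X Y
  assume XY: "(X, Y) \<in> {(A, B). agg_edge f P A B}\<^sup>*"
    and YX: "(Y, X) \<in> {(A, B). agg_edge f P A B}\<^sup>*"
  show "X = Y"
  proof (rule ccontr)
    assume "X \<noteq> Y"
    then have "(X, Y) \<in> {(A, B). agg_edge f P A B}\<^sup>+"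
      using XY by (simp add: rtrancl_eq_or_trancl)
    then have "X \<in> P" "Y \<in> P"
      using trancl_subset_Sigma[of "{(A, B). agg_edge f P A B}" P] by (auto simp: agg_edge_def)
    then have "(X, Y) \<in> communication_rel f P"
      using XY YX by (simp add: communication_rel_def communicates_def)
    with \<open>X \<noteq> Y\<close> show False
      unfolding assms by (simp add: Id_on_iff)
  qed
qed

lemma decomposable_if_not_strongly_connected:
  assumes P: "partition_on UNIV P" and trivial: "communication_rel f P = Id_on P"
    and not_sc: "\<not> strongly_connected (P, agg_edge f P)"
  shows "decomposable f"
proof -
  let ?E = "{(A, B). agg_edge f P A B}"
  have disjoint: "disjoint P" and nonempty: "{} \<notin> P" and cover: "\<Union>P = UNIV"
    using P by (auto simp: partition_on_def)
  obtain X Y where "X \<in> P" "Y \<in> P" "X \<noteq> Y"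
    using not_sc unfolding strongly_connected_agg_iff by (metis rtrancl.rtrancl_refl)
  have "?E \<subseteq> P \<times> P"
    by (auto simp: agg_edge_def)
  then have "finite ?E"
    using finite_elements[OF finite_class.finite_UNIV P] by (simp add: finite_subset)
  then have "wf (?E - Id)"
    using antisym_agg_edges_rtrancl[OF trivial] by (rule wf_Diff_Id_if_antisym_rtrancl)
  then obtain W where W: "W \<in> P" and source: "\<And>Z. (Z, W) \<in> ?E - Id \<Longrightarrow> Z \<notin> P"
    using \<open>X \<in> P\<close> by (rule wfE_min) (rule that)
  have "W \<noteq> {}"
    using W nonempty by metis
  moreover have "- W \<noteq> {}"
  proof -
    obtain Z where "Z \<in> P" "Z \<noteq> W"
      using \<open>X \<in> P\<close> \<open>Y \<in> P\<close> \<open>X \<noteq> Y\<close> by metis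
    then have "Z \<inter> W = {}" and "Z \<noteq> {}"
      using disjointD[OF disjoint _ W] nonempty by metis+
    then show ?thesis
      by auto
  qed
  moreover have "\<not> lim_infinite f i W" if "i \<notin> W" for i
  proof
    assume "lim_infinite f i W"
    moreover have "i \<in> \<Union>P"
      using cover by simp
    then obtain Z where "Z \<in> P" "i \<in> Z"
      by (rule UnionE)
    moreover have "Z \<noteq> W"
      using \<open>i \<in> Z\<close> \<open>i \<notin> W\<close> by auto
    ultimately have "(Z, W) \<in> ?E - Id"
      using W by (auto simp: agg_edge_def)
    with \<open>Z \<in> P\<close> show False
      using source by auto
  qed
  ultimately show ?thesis
    unfolding decomposable_def by (intro exI[of _ "- W"] exI[of _ W]) simp
qed

lemma lim_infinite_mono:
  assumes "topical f" "K \<subseteq> J" "lim_infinite f i K"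
  shows "lim_infinite f i J"
proof -
  have "\<forall>\<^sub>F u in at_top. f (u *\<^sub>R charvec K) $ i \<le> f (u *\<^sub>R charvec J) $ i"
    using eventually_ge_at_top[of "0::real"]
  proof (rule eventually_mono)
    fix u :: real assume "0 \<le> u"
    then have "\<forall>j. (u *\<^sub>R charvec K) $ j \<le> (u *\<^sub>R charvec J) $ j"
      using assms(2) by (auto simp: charvec_def)
    then show "f (u *\<^sub>R charvec K) $ i \<le> f (u *\<^sub>R charvec J) $ i"
      using assms(1) unfolding topical_def by blast
  qed
  then show ?thesis
    using assms(3) unfolding lim_infinite_def by (rule filterlim_at_top_mono[rotated])
qed

lemma agg_reachable_subset_if_closed:
  assumes "topical f" and closed: "\<forall>i\<in>I. \<not> lim_infinite f i (- I)"
    and respects: "\<forall>Z\<in>P. Z \<subseteq> I \<or> Z \<subseteq> - I"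
    and "(X, Y) \<in> {(A, B). agg_edge f P A B}\<^sup>*" and "X \<subseteq> I"
  shows "Y \<subseteq> I"
  using assms(4,5)
proof (induction rule: rtrancl_induct)
  case (step Y Z)
  then obtain i where "i \<in> I" and lim: "lim_infinite f i Z" and "Z \<in> P"
    unfolding agg_edge_def by blast
  show "Z \<subseteq> I"
  proof (rule ccontr)
    assume "\<not> Z \<subseteq> I"
    with respects \<open>Z \<in> P\<close> have "Z \<subseteq> - I"
      by blast
    with lim have "lim_infinite f i (- I)"
      using lim_infinite_mono[OF assms(1)] by blast
    with closed \<open>i \<in> I\<close> show False
      by blast
  qed
qed

lemma agg_parts_split_by_closed:
  assumes "topical f" and closed: "\<forall>i\<in>I. \<not> lim_infinite f i (- I)"
  shows "\<forall>Z\<in>agg_parts f k. Z \<subseteq> I \<or> Z \<subseteq> - I"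
proof (induction k)
  case 0
  show ?case
    by auto
next
  case (Suc k)
  let ?P = "agg_parts f k"
  have same_side: "Y \<subseteq> I \<longleftrightarrow> X \<subseteq> I" if "communicates f ?P X Y" for X Y
    using that agg_reachable_subset_if_closed[OF assms Suc] unfolding communicates_def by blast
  show ?case
  proof
    fix Z assume "Z \<in> agg_parts f (Suc k)"
    then obtain X where X: "X \<in> ?P" and Z: "Z = \<Union>{Y \<in> ?P. communicates f ?P X Y}"
      by auto
    show "Z \<subseteq> I \<or> Z \<subseteq> - I"
    proof (cases "X \<subseteq> I")
      case True
      then show ?thesis
        unfolding Z using same_side by blast
    next
      case False
      then have "\<forall>Y\<in>?P. communicates f ?P X Y \<longrightarrow> Y \<subseteq> - I"
        using same_side Suc by blast
      then show ?thesis
        unfolding Z by blast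
    qed
  qed
qed

lemma not_strongly_connected_if_decomposable:
  assumes "topical f" "decomposable f"
  shows "\<not> strongly_connected (agg_graph f k)"
proof
  assume sc: "strongly_connected (agg_graph f k)"
  obtain I J where "I \<union> J = UNIV" "I \<inter> J = {}" "I \<noteq> {}" "J \<noteq> {}"
    and I_J: "\<forall>i\<in>I. \<not> lim_infinite f i J"
    using assms(2) unfolding decomposable_def by blast
  then have "J = - I"
    by blast
  with I_J have closed: "\<forall>i\<in>I. \<not> lim_infinite f i (- I)"
    by simp
  obtain i j where "i \<in> I" "j \<notin> I"
    using \<open>I \<noteq> {}\<close> \<open>J \<noteq> {}\<close> \<open>J = - I\<close> by blast
  let ?P = "agg_parts f k"
  have "\<Union>?P = UNIV"
    using partition_onD1[OF partition_on_agg_parts] by metis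
  then have "i \<in> \<Union>?P" "j \<in> \<Union>?P"
    by simp_all
  then obtain X Y where "X \<in> ?P" "Y \<in> ?P" "i \<in> X" "j \<in> Y"
    by (meson UnionE)
  have respects: "\<forall>Z\<in>?P. Z \<subseteq> I \<or> Z \<subseteq> - I"
    using agg_parts_split_by_closed[OF assms(1) closed] .
  then have "X \<subseteq> I"
    using \<open>X \<in> ?P\<close> \<open>i \<in> X\<close> \<open>i \<in> I\<close> by blast
  moreover have "(X, Y) \<in> {(A, B). agg_edge f ?P A B}\<^sup>*"
    using sc \<open>X \<in> ?P\<close> \<open>Y \<in> ?P\<close> unfolding agg_graph_def strongly_connected_agg_iff by blast
  ultimately have "Y \<subseteq> I"
    using agg_reachable_subset_if_closed[OF assms(1) closed respects] by blast
  with \<open>j \<in> Y\<close> \<open>j \<notin> I\<close> show False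
    by blast
qed

theorem theorem6:
  fixes f :: "real^'n \<Rightarrow> real^'n"
  assumes "topical f"
  shows "indecomposable f \<longleftrightarrow> strongly_connected (agg_graph_inf f)"
proof -
  obtain N where N: "agg_graph_inf f = agg_graph f N"
    and trivial: "communication_rel f (agg_parts f N) = Id_on (agg_parts f N)"
    using agg_graph_inf_communication_trivial by blast
  show ?thesis
  proof
    assume "indecomposable f"
    then show "strongly_connected (agg_graph_inf f)"
      unfolding N agg_graph_def indecomposable_def
      using decomposable_if_not_strongly_connected[OF partition_on_agg_parts trivial] by blast
  next
    assume "strongly_connected (agg_graph_inf f)"
    then show "indecomposable f"
      unfolding N indecomposable_def using not_strongly_connected_if_decomposable[OF assms] by blast
  qed
qed

end
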